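(* Let $S$ be an AG-groupoid with a left identity. If $B_{1}$ and $B_{2}$ are bi-ideals of $S$, then the product $B_{1}B_{2}$ is a bi-ideal of $S$.
   Context: An AG-groupoid is a set $S$ with a binary operation satisfying $(ab)c=(cb)a$ for all $a,b,c\in S$. A left identity is an element $e$ with $ea=a$ for all $a\in S$. For nonempty subsets, $AB=\{ab:a\in A,b\in B\}$. A bi-ideal of $S$ is a nonempty subset $B$ with $BB\subseteq B$ and $(BS)B\subseteq B$. *)

theory Defs
  imports Main
begin

definition AG_groupoid :: "'a set \<Rightarrow> ('a \<Rightarrow> 'a \<Rightarrow> 'a) \<Rightarrow> bool" where
  "AG_groupoid S f \<longleftrightarrow>
     (\<forall>a\<in>S. \<forall>b\<in>S. f a b \<in> S) \<and>
     (\<forall>a\<in>S. \<forall>b\<in>S. \<forall>c\<in>S. f (f a b) c = f (f c b) a)"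

definition left_identity :: "'a set \<Rightarrow> ('a \<Rightarrow> 'a \<Rightarrow> 'a) \<Rightarrow> 'a \<Rightarrow> bool" where
  "left_identity S f e \<longleftrightarrow> e \<in> S \<and> (\<forall>a\<in>S. f e a = a)"

definition set_prod :: "('a \<Rightarrow> 'a \<Rightarrow> 'a) \<Rightarrow> 'a set \<Rightarrow> 'a set \<Rightarrow> 'a set" where
  "set_prod f A B = {f a b | a b. a \<in> A \<and> b \<in> B}"

definition bi_ideal :: "'a set \<Rightarrow> ('a \<Rightarrow> 'a \<Rightarrow> 'a) \<Rightarrow> 'a set \<Rightarrow> bool" where
  "bi_ideal S f B \<longleftrightarrow> B \<noteq> {} \<and> B \<subseteq> S \<and>
     set_prod f B B \<subseteq> B \<and> set_prod f (set_prod f B S) B \<subseteq> B"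

end

theory Submission
  imports Defs
begin

(* In an AG-groupoid every four elements satisfy the medial law
   (ab)(cd) = (ac)(bd), a consequence of the left invertive law alone.  With a
   left identity e, each element s may be written as es, so the medial law
   also gives (ab)s = (ae)(bs).  For bi-ideals B1, B2 and a, c in B1, b, d in B2:
     (ab)(cd) = (ac)(bd)                 with ac in B1, bd in B2,
     ((ab)s)(cd) = ((ae)(bs))(cd) = ((ae)c)((bs)d)
                                         with (ae)c in B1, (bs)d in B2.
   Hence B1B2 is closed under products and under the bi-ideal condition. *)

lemma AG_closed:
  assumes "AG_groupoid S f" "a \<in> S" "b \<in> S"
  shows "f a b \<in> S"
  using assms unfolding AG_groupoid_def by blast

lemma AG_left_invertive:
  assumes "AG_groupoid S f" "a \<in> S" "b \<in> S" "c \<in> S"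
  shows "f (f a b) c = f (f c b) a"
  using assms unfolding AG_groupoid_def by blast

lemma bi_idealD:
  assumes "bi_ideal S f B"
  shows "B \<noteq> {}" "B \<subseteq> S"
    and "\<And>x y. x \<in> B \<Longrightarrow> y \<in> B \<Longrightarrow> f x y \<in> B"
    and "\<And>x s y. x \<in> B \<Longrightarrow> s \<in> S \<Longrightarrow> y \<in> B \<Longrightarrow> f (f x s) y \<in> B"
  using assms unfolding bi_ideal_def set_prod_def by blast+

lemma set_prodI: "a \<in> A \<Longrightarrow> b \<in> B \<Longrightarrow> f a b \<in> set_prod f A B"
  unfolding set_prod_def by blast

lemma set_prodE:
  assumes "z \<in> set_prod f A B"
  obtains a b where "z = f a b" "a \<in> A" "b \<in> B"
  using assms unfolding set_prod_def by blast

lemma AG_medial: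
  assumes AG: "AG_groupoid S f" and S: "a \<in> S" "b \<in> S" "c \<in> S" "d \<in> S"
  shows "f (f a b) (f c d) = f (f a c) (f b d)"
proof -
  have "f (f a b) (f c d) = f (f (f c d) b) a"
    using AG_left_invertive[OF AG, of a b "f c d"] AG_closed[OF AG] S by simp
  also have "\<dots> = f (f (f b d) c) a"
    using AG_left_invertive[OF AG, of c d b] S by simp
  also have "\<dots> = f (f a c) (f b d)"
    using AG_left_invertive[OF AG, of "f b d" c a] AG_closed[OF AG] S by simp
  finally show ?thesis .
qed

lemma AG_left_identity_split:
  assumes AG: "AG_groupoid S f" and e: "left_identity S f e"
    and S: "a \<in> S" "b \<in> S" "s \<in> S"
  shows "f (f a b) s = f (f a e) (f b s)"
proof -
  have "e \<in> S" "f e s = s" using e S unfolding left_identity_def by auto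
  then have "f (f a b) s = f (f a b) (f e s)" by simp
  also have "\<dots> = f (f a e) (f b s)" using AG_medial[OF AG] S \<open>e \<in> S\<close> by blast
  finally show ?thesis .
qed

(* The product of two bi-ideals is closed under multiplication:
   (ab)(cd) = (ac)(bd) with ac \<in> B1 and bd \<in> B2. *)
lemma bi_ideal_prod_mult_closed:
  assumes AG: "AG_groupoid S f" and "bi_ideal S f B1" "bi_ideal S f B2"
  shows "set_prod f (set_prod f B1 B2) (set_prod f B1 B2) \<subseteq> set_prod f B1 B2"
proof -
  note B1 = bi_idealD[OF assms(2)] and B2 = bi_idealD[OF assms(3)]
  have "f (f a b) (f c d) \<in> set_prod f B1 B2"
    if "a \<in> B1" "b \<in> B2" "c \<in> B1" "d \<in> B2" for a b c d
  proof -
    have "f (f a b) (f c d) = f (f a c) (f b d)"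
      using AG_medial[OF AG] that B1(2) B2(2) by blast
    then show ?thesis using that B1(3) B2(3) set_prodI by metis
  qed
  then show ?thesis by (auto elim!: set_prodE)
qed

(* The product of two bi-ideals satisfies the bi-ideal sandwich condition:
   ((ab)s)(cd) = ((ae)(bs))(cd) = ((ae)c)((bs)d), with (ae)c \<in> B1 and
   (bs)d \<in> B2.  This is where the left identity is needed. *)
lemma bi_ideal_prod_sandwich_closed:
  assumes AG: "AG_groupoid S f" and e: "left_identity S f e"
    and "bi_ideal S f B1" "bi_ideal S f B2"
  shows "set_prod f (set_prod f (set_prod f B1 B2) S) (set_prod f B1 B2) \<subseteq> set_prod f B1 B2"
proof -
  note B1 = bi_idealD[OF assms(3)] and B2 = bi_idealD[OF assms(4)]
  have eS: "e \<in> S" using e unfolding left_identity_def by blast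
  have "f (f (f a b) s) (f c d) \<in> set_prod f B1 B2"
    if "a \<in> B1" "b \<in> B2" "s \<in> S" "c \<in> B1" "d \<in> B2" for a b s c d
  proof -
    have S: "a \<in> S" "b \<in> S" "c \<in> S" "d \<in> S" using that B1(2) B2(2) by auto
    have "f (f (f a b) s) (f c d) = f (f (f a e) (f b s)) (f c d)"
      using AG_left_identity_split[OF AG e] S \<open>s \<in> S\<close> by simp
    also have "\<dots> = f (f (f a e) c) (f (f b s) d)"
      using AG_medial[OF AG, of "f a e" "f b s" c d] AG_closed[OF AG] S eS \<open>s \<in> S\<close>
      by simp
    finally show ?thesis using that eS B1(4) B2(4) set_prodI by metis
  qed
  then show ?thesis by (auto elim!: set_prodE)
qed

theorem proposition2:
  fixes S :: "'a set" and f :: "'a \<Rightarrow> 'a \<Rightarrow> 'a" and e :: 'a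
  assumes "AG_groupoid S f"
    and "left_identity S f e"
    and "bi_ideal S f B1"
    and "bi_ideal S f B2"
  shows "bi_ideal S f (set_prod f B1 B2)"
proof -
  note B1 = bi_idealD[OF assms(3)] and B2 = bi_idealD[OF assms(4)]
  have "set_prod f B1 B2 \<noteq> {}"
    using B1(1) B2(1) unfolding set_prod_def by blast
  moreover have "set_prod f B1 B2 \<subseteq> S"
    using B1(2) B2(2) AG_closed[OF assms(1)] unfolding set_prod_def by blast
  ultimately show ?thesis
    unfolding bi_ideal_def
    using bi_ideal_prod_mult_closed[OF assms(1,3,4)]
      bi_ideal_prod_sandwich_closed[OF assms] by blast
qed

end
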